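(* Let $m<n$ be natural numbers, $Y=[\omega]^n$, $\mathcal{I}$ the ideal of thin subsets of $[\omega]^n$, and $\psi=\lambda^{(n-m)}\partial^{(n-m)}$. Suppose $S\subseteq[\omega]^n$ is not $(<\!\aleph_0)$-near-closed, and let $p,q\in\beta[\omega]^n$ be such that $p$ $\psi$-intertwines $q$ over $S$ modulo $\mathcal{I}$. Then $\pi^n_m(p)=\pi^n_m(q)$.
   Context: $T\subseteq[\omega]^k$ is thick if for every $j\geq k$ there is $s\in[\omega]^j$ with $[s]^k\subseteq T$; thin otherwise (thin sets form an ideal). For $T\subseteq[\omega]^n$, $\partial^{(n-m)}T=\{s\in[\omega]^m:\exists t\in[\omega]^{n-m}\ (s\cup t\in T)\}$, and for $A\subseteq[\omega]^m$, $\lambda^{(n-m)}A=\{s\in[\omega]^n:[s]^m\subseteq A\}$. For a thick ultrafilter $p$ on $[\omega]^n$, $\pi^n_m(p)$ is the unique thick ultrafilter $q'$ on $[\omega]^m$ such that $\{a\in[\omega]^n:[a]^m\subseteq R\}\in p$ for every $R\in q'$. Write $R\subseteq_{\mathcal{I}}T$ if $R\setminus T\in\mathcal{I}$. A set $T$ is closed if $\psi(T)=T$; near-closed if $T\,\Delta\,T'\in\mathcal{I}$ for some closed $T'$; $(<\!\aleph_0)$-near-closed if $T\,\Delta\,(T_0\cup\dots\cup T_{k-1})\in\mathcal{I}$ for some $k<\omega$ and closed $T_i$. For $S$ not $(<\!\aleph_0)$-near-closed, $p$ $\psi$-intertwines $q$ over $S$ modulo $\mathcal{I}$ if: (1) $S\setminus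 T\in p$ for every near-closed $T$ with $T\subseteq_{\mathcal{I}}S$; (2) $\psi(T)\setminus S\in q$ for every $T\in p$ with $T\subseteq S$; (3) $p$ and $q$ contain the complement of every member of $\mathcal{I}$. *)

theory Defs
  imports Main
begin

definition kset :: "nat \<Rightarrow> nat set set" where
  "kset k = {s. finite s \<and> card s = k}"

definition ksub :: "nat set \<Rightarrow> nat \<Rightarrow> nat set set" where
  "ksub s k = {t. t \<subseteq> s \<and> finite t \<and> card t = k}"

definition thick :: "nat \<Rightarrow> nat set set \<Rightarrow> bool" where
  "thick k T \<longleftrightarrow> (\<forall>j\<ge>k. \<exists>s\<in>kset j. ksub s k \<subseteq> T)"

definition thin :: "nat \<Rightarrow> nat set set \<Rightarrow> bool" where
  "thin k T \<longleftrightarrow> \<not> thick k T"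

definition thin_ideal :: "nat \<Rightarrow> nat set set set" where
  "thin_ideal n = {T. T \<subseteq> kset n \<and> thin n T}"

definition shadow :: "nat \<Rightarrow> nat \<Rightarrow> nat set set \<Rightarrow> nat set set" where
  "shadow m n T = {s \<in> kset m. \<exists>t \<in> kset (n - m). s \<union> t \<in> T}"

definition lift :: "nat \<Rightarrow> nat \<Rightarrow> nat set set \<Rightarrow> nat set set" where
  "lift m n A = {s \<in> kset n. ksub s m \<subseteq> A}"

definition psi :: "nat \<Rightarrow> nat \<Rightarrow> nat set set \<Rightarrow> nat set set" where
  "psi m n T = lift m n (shadow m n T)"

definition ultrafilter_on :: "'a set \<Rightarrow> 'a set set \<Rightarrow> bool" where
  "ultrafilter_on X U \<longleftrightarrow>
     (\<forall>A\<in>U. A \<subseteq> X) \<and> X \<in> U \<and> {} \<notin> U \<and>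
     (\<forall>A B. A \<in> U \<and> A \<subseteq> B \<and> B \<subseteq> X \<longrightarrow> B \<in> U) \<and>
     (\<forall>A B. A \<in> U \<and> B \<in> U \<longrightarrow> A \<inter> B \<in> U) \<and>
     (\<forall>A. A \<subseteq> X \<longrightarrow> A \<in> U \<or> X - A \<in> U)"

definition thick_ultrafilter :: "nat \<Rightarrow> nat set set set \<Rightarrow> bool" where
  "thick_ultrafilter k U \<longleftrightarrow> ultrafilter_on (kset k) U \<and> (\<forall>A\<in>U. thick k A)"

definition proj :: "nat \<Rightarrow> nat \<Rightarrow> nat set set set \<Rightarrow> nat set set set" where
  "proj n m p = (THE q'. thick_ultrafilter m q' \<and>
      (\<forall>R\<in>q'. {a \<in> kset n. ksub a m \<subseteq> R} \<in> p))"

definition closed_set :: "nat \<Rightarrow> nat \<Rightarrow> nat set set \<Rightarrow> bool" where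
  "closed_set m n T \<longleftrightarrow> T \<subseteq> kset n \<and> psi m n T = T"

definition near_closed :: "nat \<Rightarrow> nat \<Rightarrow> nat set set \<Rightarrow> bool" where
  "near_closed m n T \<longleftrightarrow>
     (\<exists>T'. closed_set m n T' \<and> (T - T') \<union> (T' - T) \<in> thin_ideal n)"

definition fin_near_closed :: "nat \<Rightarrow> nat \<Rightarrow> nat set set \<Rightarrow> bool" where
  "fin_near_closed m n T \<longleftrightarrow>
     (\<exists>k::nat. \<exists>Ts::nat \<Rightarrow> nat set set. (\<forall>i<k. closed_set m n (Ts i)) \<and>
        (let U = (\<Union>i<k. Ts i) in (T - U) \<union> (U - T) \<in> thin_ideal n))"

definition intertwines ::
  "nat \<Rightarrow> nat \<Rightarrow> nat set set set \<Rightarrow> nat set set set \<Rightarrow> nat set set \<Rightarrow> bool" where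
  "intertwines m n p q S \<longleftrightarrow>
     (\<forall>T. T \<subseteq> kset n \<and> near_closed m n T \<and> T - S \<in> thin_ideal n \<longrightarrow> S - T \<in> p) \<and>
     (\<forall>T\<in>p. T \<subseteq> S \<longrightarrow> psi m n T - S \<in> q) \<and>
     (\<forall>A\<in>thin_ideal n. kset n - A \<in> p \<and> kset n - A \<in> q)"

end

theory Submission
  imports Defs "HOL-Library.Ramsey"
begin

text \<open>
  For an ultrafilter \<open>p\<close> on \<open>[\<omega>]\<^sup>n\<close> avoiding thin sets, \<open>\<pi>\<^sup>n\<^sub>m(p)\<close> is the family of
  all \<open>R \<subseteq> [\<omega>]\<^sup>m\<close> with \<open>\<lambda>(R) \<in> p\<close>: by finite Ramsey, the \<open>n\<close>-sets that are
  homogeneous neither for \<open>R\<close> nor for its complement form a thin set, so this family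
  is an ultrafilter. Clause (1) of intertwining, applied to the closed set \<open>\<emptyset>\<close>, gives
  \<open>S \<in> p\<close>. If \<open>\<lambda>(R) \<in> p\<close>, then \<open>T = S \<inter> \<lambda>(R) \<in> p\<close>, and since \<open>\<partial>(\<lambda>(R)) \<subseteq> R\<close> we
  get \<open>\<psi>(T) \<subseteq> \<lambda>(R)\<close>; clause (2) puts \<open>\<psi>(T) - S\<close> into \<open>q\<close>, hence \<open>\<lambda>(R) \<in> q\<close>.
  So \<open>\<pi>\<^sup>n\<^sub>m(p) \<subseteq> \<pi>\<^sup>n\<^sub>m(q)\<close>, and inclusion between ultrafilters is equality.
\<close>

lemma ultrafilter_on_subset: "ultrafilter_on X U \<Longrightarrow> A \<in> U \<Longrightarrow> A \<subseteq> X"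
  unfolding ultrafilter_on_def by (elim conjE) (erule bspec)

lemma ultrafilter_on_top: "ultrafilter_on X U \<Longrightarrow> X \<in> U"
  unfolding ultrafilter_on_def by (elim conjE)

lemma ultrafilter_on_not_empty: "ultrafilter_on X U \<Longrightarrow> {} \<notin> U"
  unfolding ultrafilter_on_def by (elim conjE)

lemma ultrafilter_on_mono: "ultrafilter_on X U \<Longrightarrow> A \<in> U \<Longrightarrow> A \<subseteq> B \<Longrightarrow> B \<subseteq> X \<Longrightarrow> B \<in> U"
  unfolding ultrafilter_on_def by (elim conjE) metis

lemma ultrafilter_on_Int: "ultrafilter_on X U \<Longrightarrow> A \<in> U \<Longrightarrow> B \<in> U \<Longrightarrow> A \<inter> B \<in> U"
  unfolding ultrafilter_on_def by (elim conjE) metis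

lemma ultrafilter_on_Diff: "ultrafilter_on X U \<Longrightarrow> A \<subseteq> X \<Longrightarrow> A \<notin> U \<Longrightarrow> X - A \<in> U"
  unfolding ultrafilter_on_def by (elim conjE) metis

lemma ultrafilter_on_disjoint:
  assumes "ultrafilter_on X U" "A \<in> U" "B \<in> U" "A \<inter> B = {}"
  shows False
  using ultrafilter_on_Int[OF assms(1-3)] ultrafilter_on_not_empty[OF assms(1)] assms(4) by simp

lemma ultrafilter_on_eqI:
  assumes U: "ultrafilter_on X U" and V: "ultrafilter_on X V" and "U \<subseteq> V"
  shows "U = V"
proof (rule antisym)
  show "V \<subseteq> U"
  proof
    fix A assume "A \<in> V"
    show "A \<in> U"
    proof (rule ccontr)
      assume "A \<notin> U"
      then have "X - A \<in> V"
        using ultrafilter_on_Diff[OF U ultrafilter_on_subset[OF V \<open>A \<in> V\<close>]] \<open>U \<subseteq> V\<close> by blast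
      with \<open>A \<in> V\<close> show False by (rule ultrafilter_on_disjoint[OF V]) blast
    qed
  qed
qed fact

lemma partn_lst_finite_card_ge:
  assumes N: "partn_lst {..<N} \<alpha> \<gamma>" and s: "finite s" "N \<le> card s"
  shows "partn_lst s \<alpha> \<gamma>"
  unfolding partn_lst_def monochromatic_def
proof (intro ballI)
  fix f assume f: "f \<in> nsets s \<gamma> \<rightarrow> {..<length \<alpha>}"
  obtain h where h: "bij_betw h {..<card s} s"
    using ex_bij_betw_nat_finite[OF s(1)] by (auto simp: atLeast0LessThan)
  then have "h \<in> {..<card s} \<rightarrow> s" "inj_on h {..<card s}"
    by (auto simp: bij_betw_def)
  from nsets_compose_image_funcset[OF f this] obtain i H
    where i: "i < length \<alpha>" and H: "H \<in> nsets {..<card s} (\<alpha>!i)"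
      and hom: "(f \<circ> image h) ` nsets H \<gamma> \<subseteq> {i}"
    using partn_lstE[OF partn_lst_greater_resource[OF N s(2)]] by blast
  have "h ` H \<in> nsets s (\<alpha>!i)"
    using bij_betw_nsets[OF h] H by (auto simp: bij_betw_def)
  moreover have "f ` nsets (h ` H) \<gamma> \<subseteq> {i}"
  proof
    fix y assume "y \<in> f ` nsets (h ` H) \<gamma>"
    then obtain X where X: "X \<in> nsets (h ` H) \<gamma>" and y: "y = f X" by blast
    have "inj_on h H"
      using h H by (auto simp: bij_betw_def nsets_def intro: inj_on_subset)
    with X obtain Y where "Y \<in> nsets H \<gamma>" "X = h ` Y" by (rule nset_image_obtains)
    with hom y show "y \<in> {i}" by auto
  qed
  ultimately show "\<exists>i<length \<alpha>. \<exists>H\<in>nsets s (\<alpha>!i). f ` nsets H \<gamma> \<subseteq> {i}"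
    using i by blast
qed

lemma finite_ramsey_two_colours:
  obtains N :: nat where
    "\<And>s. finite s \<Longrightarrow> N \<le> card s \<Longrightarrow> \<exists>H\<in>nsets s n. nsets H m \<subseteq> R \<or> nsets H m \<inter> R = {}"
proof -
  obtain N :: nat where N: "partn_lst {..<N} [n, n] m"
    using ramsey_full by blast
  have "\<exists>H\<in>nsets s n. nsets H m \<subseteq> R \<or> nsets H m \<inter> R = {}"
    if s: "finite s" "N \<le> card s" for s
  proof -
    define f where "f X = (if X \<in> R then 0 else 1 :: nat)" for X
    have "f \<in> nsets s m \<rightarrow> {..<2}" by (simp add: f_def)
    then obtain i H where "i < length [n, n]" "H \<in> nsets s ([n, n] ! i)" "f ` nsets H m \<subseteq> {i}"
      by (rule partn_lstE[OF partn_lst_finite_card_ge[OF N s]]) simp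
    then show ?thesis
      by (cases i) (auto simp: f_def image_subset_iff split: if_splits)
  qed
  then show thesis by (rule that)
qed

lemma ksub_eq_nsets: "ksub s k = nsets s k"
  by (simp add: ksub_def nsets_def)

lemma ksub_subset_kset: "ksub s k \<subseteq> kset k"
  by (auto simp: ksub_def kset_def)

lemma ksub_kset_nonempty: "s \<in> kset n \<Longrightarrow> m \<le> n \<Longrightarrow> ksub s m \<noteq> {}"
  by (simp add: ksub_eq_nsets nsets_eq_empty_iff kset_def)

lemma lift_subset_kset: "lift m n R \<subseteq> kset n"
  by (simp add: lift_def)

lemma lift_mono: "A \<subseteq> B \<Longrightarrow> lift m n A \<subseteq> lift m n B"
  by (auto simp: lift_def)

lemma lift_Int: "lift m n (A \<inter> B) = lift m n A \<inter> lift m n B"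
  by (auto simp: lift_def)

lemma lift_kset: "lift m n (kset m) = kset n"
  using ksub_subset_kset by (auto simp: lift_def)

lemma lift_empty: "m \<le> n \<Longrightarrow> lift m n {} = {}"
  using ksub_kset_nonempty by (auto simp: lift_def)

lemma shadow_lift_subset: "shadow m n (lift m n R) \<subseteq> R"
proof
  fix s assume "s \<in> shadow m n (lift m n R)"
  then obtain t where "s \<in> kset m" "s \<union> t \<in> lift m n R"
    by (auto simp: shadow_def)
  moreover from this have "s \<in> ksub (s \<union> t) m"
    by (auto simp: ksub_def kset_def lift_def)
  ultimately show "s \<in> R" by (auto simp: lift_def)
qed

lemma psi_subset_lift: "T \<subseteq> lift m n R \<Longrightarrow> psi m n T \<subseteq> lift m n R"
proof -
  assume "T \<subseteq> lift m n R"
  then have "shadow m n T \<subseteq> shadow m n (lift m n R)"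
    by (auto simp: shadow_def)
  also have "\<dots> \<subseteq> R" by (rule shadow_lift_subset)
  finally show ?thesis unfolding psi_def by (rule lift_mono)
qed

lemma closed_set_empty: "m \<le> n \<Longrightarrow> closed_set m n {}"
  by (simp add: closed_set_def psi_def shadow_def lift_empty)

lemma thin_ideal_empty: "{} \<in> thin_ideal n"
  by (auto simp: thin_ideal_def thin_def thick_def ksub_def kset_def)

lemma near_closed_empty: "m \<le> n \<Longrightarrow> near_closed m n {}"
  using closed_set_empty thin_ideal_empty by (force simp: near_closed_def)

lemma not_homogeneous_in_thin_ideal:
  assumes "m \<le> n"
  shows "kset n - (lift m n R \<union> lift m n (kset m - R)) \<in> thin_ideal n"
proof -
  obtain N where N: "\<And>s. finite s \<Longrightarrow> N \<le> card s \<Longrightarrow>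
      \<exists>H\<in>nsets s n. nsets H m \<subseteq> R \<or> nsets H m \<inter> R = {}"
    using finite_ramsey_two_colours[of n m R] by blast
  have "\<exists>H\<in>ksub s n. H \<in> lift m n R \<union> lift m n (kset m - R)" if "s \<in> kset (max N n)" for s
  proof -
    from that N obtain H where "H \<in> nsets s n" "nsets H m \<subseteq> R \<or> nsets H m \<inter> R = {}"
      by (force simp: kset_def)
    then show ?thesis
      using ksub_subset_kset[of H m] ksub_subset_kset[of s n]
      by (auto simp: ksub_eq_nsets lift_def)
  qed
  then show ?thesis
    unfolding thin_ideal_def thin_def thick_def by (force intro: exI[of _ "max N n"])
qed

lemma thick_lift_imp_thick:
  assumes mn: "m \<le> n" and thick: "thick n (lift m n R)"
  shows "thick m R"
  unfolding thick_def
proof (intro allI impI)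
  fix j assume "j \<ge> m"
  obtain s' where s': "s' \<in> kset (max j n)" "ksub s' n \<subseteq> lift m n R"
    using thick unfolding thick_def by (meson max.cobounded2)
  then have "j \<le> card s'" by (simp add: kset_def)
  then obtain s where s: "s \<subseteq> s'" "card s = j" "finite s"
    by (rule obtain_subset_with_card_n)
  have "ksub s m \<subseteq> R"
  proof
    fix x assume x: "x \<in> ksub s m"
    then obtain y where y: "x \<subseteq> y" "y \<subseteq> s'" "card y = n"
      using exists_subset_between[of x n s'] s s' mn by (auto simp: ksub_def kset_def)
    then have "y \<in> lift m n R"
      using s' by (auto simp: ksub_def kset_def intro: finite_subset)
    moreover have "x \<in> ksub y m" using x y by (auto simp: ksub_def)
    ultimately show "x \<in> R" by (auto simp: lift_def)
  qed
  with s show "\<exists>s\<in>kset j. ksub s m \<subseteq> R" by (auto simp: kset_def)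
qed

definition proj_filter :: "nat \<Rightarrow> nat \<Rightarrow> nat set set set \<Rightarrow> nat set set set" where
  "proj_filter n m p = {R. R \<subseteq> kset m \<and> lift m n R \<in> p}"

locale thin_avoiding_ultrafilter =
  fixes n :: nat and p :: "nat set set set"
  assumes ultrafilter: "ultrafilter_on (kset n) p"
    and thin_compl_mem: "A \<in> thin_ideal n \<Longrightarrow> kset n - A \<in> p"
begin

lemma thick_if_mem: "A \<in> p \<Longrightarrow> thick n A"
  using thin_compl_mem[of A] ultrafilter_on_disjoint[OF ultrafilter, of A "kset n - A"]
    ultrafilter_on_subset[OF ultrafilter]
  by (auto simp: thin_ideal_def thin_def)

lemma lift_or_lift_compl_mem:
  assumes "m \<le> n"
  shows "lift m n R \<in> p \<or> lift m n (kset m - R) \<in> p"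
proof (rule ccontr)
  let ?L = "lift m n R" and ?L' = "lift m n (kset m - R)"
  assume "\<not> ?thesis"
  then have "kset n - ?L \<in> p" "kset n - ?L' \<in> p"
    using ultrafilter_on_Diff[OF ultrafilter lift_subset_kset] by blast+
  moreover have "kset n - (kset n - (?L \<union> ?L')) \<in> p"
    by (rule thin_compl_mem[OF not_homogeneous_in_thin_ideal[OF assms]])
  ultimately have "(kset n - ?L) \<inter> (kset n - ?L') \<inter> (kset n - (kset n - (?L \<union> ?L'))) \<in> p"
    by (intro ultrafilter_on_Int[OF ultrafilter])
  moreover have "(kset n - ?L) \<inter> (kset n - ?L') \<inter> (kset n - (kset n - (?L \<union> ?L'))) = {}"
    by blast
  ultimately show False
    using ultrafilter_on_not_empty[OF ultrafilter] by simp
qed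

lemma ultrafilter_on_proj_filter:
  assumes mn: "m \<le> n"
  shows "ultrafilter_on (kset m) (proj_filter n m p)"
  unfolding ultrafilter_on_def
proof (intro conjI allI impI ballI)
  show "kset m \<in> proj_filter n m p"
    by (simp add: proj_filter_def lift_kset ultrafilter_on_top[OF ultrafilter])
  show "{} \<notin> proj_filter n m p"
    by (simp add: proj_filter_def lift_empty[OF mn] ultrafilter_on_not_empty[OF ultrafilter])
  fix A B
  show "A \<in> proj_filter n m p \<Longrightarrow> A \<subseteq> kset m"
    by (simp add: proj_filter_def)
  show "B \<in> proj_filter n m p" if "A \<in> proj_filter n m p \<and> A \<subseteq> B \<and> B \<subseteq> kset m"
    using that ultrafilter_on_mono[OF ultrafilter _ lift_mono lift_subset_kset]
    by (auto simp: proj_filter_def)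
  show "A \<inter> B \<in> proj_filter n m p" if "A \<in> proj_filter n m p \<and> B \<in> proj_filter n m p"
    using that ultrafilter_on_Int[OF ultrafilter] by (auto simp: proj_filter_def lift_Int)
  show "A \<in> proj_filter n m p \<or> kset m - A \<in> proj_filter n m p" if "A \<subseteq> kset m"
    using that lift_or_lift_compl_mem[OF mn, of A] by (auto simp: proj_filter_def)
qed

lemma proj_eq_proj_filter:
  assumes mn: "m \<le> n"
  shows "proj n m p = proj_filter n m p"
  unfolding proj_def
proof (rule the_equality)
  have "thick m R" if "R \<in> proj_filter n m p" for R
    using that thick_lift_imp_thick[OF mn] thick_if_mem by (auto simp: proj_filter_def)
  then show "thick_ultrafilter m (proj_filter n m p) \<and>
      (\<forall>R\<in>proj_filter n m p. {a \<in> kset n. ksub a m \<subseteq> R} \<in> p)"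
    using ultrafilter_on_proj_filter[OF mn]
    by (auto simp: thick_ultrafilter_def proj_filter_def lift_def)
next
  fix q' assume q': "thick_ultrafilter m q' \<and> (\<forall>R\<in>q'. {a \<in> kset n. ksub a m \<subseteq> R} \<in> p)"
  then have "ultrafilter_on (kset m) q'" "q' \<subseteq> proj_filter n m p"
    using ultrafilter_on_subset
    by (auto simp: thick_ultrafilter_def proj_filter_def lift_def)
  then show "q' = proj_filter n m p"
    using ultrafilter_on_eqI ultrafilter_on_proj_filter[OF mn] by blast
qed

end

lemma intertwines_thin_avoiding:
  assumes "ultrafilter_on (kset n) p" "ultrafilter_on (kset n) q" "intertwines m n p q S"
  shows "thin_avoiding_ultrafilter n p" "thin_avoiding_ultrafilter n q"
  using assms by (simp_all add: thin_avoiding_ultrafilter_def intertwines_def)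

lemma intertwines_mem_left:
  assumes "m \<le> n" "intertwines m n p q S"
  shows "S \<in> p"
proof -
  have "{} \<subseteq> kset n" "near_closed m n {}" "{} - S \<in> thin_ideal n"
    using near_closed_empty[OF assms(1)] thin_ideal_empty by simp_all
  then have "S - {} \<in> p"
    using assms(2) unfolding intertwines_def by blast
  then show ?thesis by simp
qed

lemma intertwines_proj_filter_subset:
  assumes mn: "m \<le> n" and p: "ultrafilter_on (kset n) p" and q: "ultrafilter_on (kset n) q"
    and pq: "intertwines m n p q S"
  shows "proj_filter n m p \<subseteq> proj_filter n m q"
proof
  fix R assume R: "R \<in> proj_filter n m p"
  define T where "T = S \<inter> lift m n R"
  have "T \<in> p"
    using R ultrafilter_on_Int[OF p intertwines_mem_left[OF mn pq]]
    by (simp add: T_def proj_filter_def)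
  then have "psi m n T - S \<in> q"
    using pq by (simp add: intertwines_def T_def)
  moreover have "psi m n T \<subseteq> lift m n R"
    by (rule psi_subset_lift) (simp add: T_def)
  ultimately have "lift m n R \<in> q"
    using ultrafilter_on_mono[OF q _ _ lift_subset_kset] by blast
  with R show "R \<in> proj_filter n m q" by (simp add: proj_filter_def)
qed

theorem mainTheorem11:
  fixes m n :: nat and S :: "nat set set" and p q :: "nat set set set"
  assumes "m < n"
    and "S \<subseteq> kset n"
    and "\<not> fin_near_closed m n S"
    and "ultrafilter_on (kset n) p"
    and "ultrafilter_on (kset n) q"
    and "intertwines m n p q S"
  shows "proj n m p = proj n m q"
proof -
  \<comment> \<open>The hypotheses on \<open>S\<close> only make intertwining a meaningful notion.\<close>
  have mn: "m \<le> n" using \<open>m < n\<close> by simp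
  interpret p: thin_avoiding_ultrafilter n p
    using intertwines_thin_avoiding assms(4-6) by blast
  interpret q: thin_avoiding_ultrafilter n q
    using intertwines_thin_avoiding assms(4-6) by blast
  have "proj_filter n m p = proj_filter n m q"
    using ultrafilter_on_eqI[OF p.ultrafilter_on_proj_filter[OF mn] q.ultrafilter_on_proj_filter[OF mn]]
      intertwines_proj_filter_subset[OF mn assms(4-6)] .
  then show ?thesis
    by (simp add: p.proj_eq_proj_filter[OF mn] q.proj_eq_proj_filter[OF mn])
qed

end
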